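(* Let $\mathcal H$, $U$, $\mathcal K$, $P_{\mathcal K}$, $S=(I-P_{\mathcal K})U$, $\Theta_S$ and $\tilde U$ be as in the context. Let $E$ be the spectral measure of $U$, i.e. $\langle (U+zI)(U-zI)^{-1}h_1,h_2\rangle=\int_{\mathbb T}\frac{\xi+z}{\xi-z}\,d\langle E(\xi)h_1,h_2\rangle$ for all $h_1,h_2\in\mathcal H$, $z\in\mathbb D$. Let $B$ be the generalized spectral measure on $\mathcal K$ determined by $$\big\langle (\tilde U+\Theta_S(z))(\tilde U-\Theta_S(z))^{-1}k_1,k_2\big\rangle=\int_{\mathbb T}\frac{\xi+z}{\xi-z}\,d\langle B(\xi)k_1,k_2\rangle\qquad(k_1,k_2\in\mathcal K,\ z\in\mathbb D).$$ Then for every Borel set $\Delta\subset\mathbb T$, $B(\Delta)=P_{\mathcal K}E(\Delta)|_{\mathcal K}$.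
   Context: $\mathcal H$ is a complex Hilbert space, $U\in\mathcal B(\mathcal H)$ is unitary, $\mathcal K\subset \mathcal H$ is a closed subspace with orthogonal projection $P_{\mathcal K}$, $S=(I-P_{\mathcal K})U$, and $\tilde U:U^*(\mathcal K)\to\mathcal K$ is the restriction of $U$. For a contraction $T$, $D_T=(I-T^*T)^{1/2}$, $D_{T^*}=(I-TT^* )^{1/2}$, $\mathcal D_T=\overline{D_T\mathcal H}$, $\mathcal D_{T^*}=\overline{D_{T^*}\mathcal H}$, and the characteristic function is $\Theta_T(z)=\big(-T+zD_{T^*}(I-zT^* )^{-1}D_T\big)|_{\mathcal D_T}$, $z\in\mathbb D$; here $\Theta_S(z):U^*(\mathcal K)\to\mathcal K$. A generalized spectral measure on $\mathbb T$ with values in $\mathcal B(\mathcal K)$ is a map $B$ from Borel sets of $\mathbb T$ to positive bounded operators on $\mathcal K$ with $B(\emptyset)=0$, $B(\mathbb T)=I$, and countably additive in the strong operator topology. *)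

theory Defs
  imports "HOL-Analysis.Analysis"
begin

class cvec = real_vector +
  fixes scaleC :: "complex \<Rightarrow> 'a \<Rightarrow> 'a"
  assumes scaleC_add_right: "scaleC a (x + y) = scaleC a x + scaleC a y"
    and scaleC_add_left: "scaleC (a + b) x = scaleC a x + scaleC b x"
    and scaleC_scaleC: "scaleC a (scaleC b x) = scaleC (a * b) x"
    and scaleC_one: "scaleC 1 x = x"
    and scaleR_is_scaleC: "scaleR r x = scaleC (complex_of_real r) x"

class cinner_space = cvec + real_normed_vector +
  fixes cinner :: "'a \<Rightarrow> 'a \<Rightarrow> complex"
  assumes cinner_commute: "cinner x y = cnj (cinner y x)"
    and cinner_add_left: "cinner (x + y) z = cinner x z + cinner y z"
    and cinner_scaleC_left: "cinner (scaleC c x) y = c * cinner x y"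
    and cinner_real_nonneg: "Im (cinner x x) = 0 \<and> 0 \<le> Re (cinner x x)"
    and cinner_eq_zero_iff: "cinner x x = 0 \<longleftrightarrow> x = 0"
    and norm_eq_sqrt_cinner: "norm x = sqrt (Re (cinner x x))"

class chilbert = cinner_space + complete_space

definition hs_clinear :: "('a::cvec \<Rightarrow> 'b::cvec) \<Rightarrow> bool" where
  "hs_clinear f \<longleftrightarrow> (\<forall>x y. f (x + y) = f x + f y) \<and> (\<forall>c x. f (scaleC c x) = scaleC c (f x))"

definition hs_bounded :: "('a::cinner_space \<Rightarrow> 'b::cinner_space) \<Rightarrow> bool" where
  "hs_bounded f \<longleftrightarrow> hs_clinear f \<and> (\<exists>C. \<forall>x. norm (f x) \<le> C * norm x)"

definition hs_adj :: "('a::chilbert \<Rightarrow> 'a) \<Rightarrow> ('a \<Rightarrow> 'a)" where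
  "hs_adj T = (THE T'. \<forall>x y. cinner (T x) y = cinner x (T' y))"

definition hs_unitary :: "('a::chilbert \<Rightarrow> 'a) \<Rightarrow> bool" where
  "hs_unitary U \<longleftrightarrow> hs_bounded U \<and> bij U \<and> (\<forall>x y. cinner (U x) (U y) = cinner x y)"

definition hs_closed_subspace :: "'a::chilbert set \<Rightarrow> bool" where
  "hs_closed_subspace K \<longleftrightarrow> 0 \<in> K \<and> (\<forall>x\<in>K. \<forall>y\<in>K. x + y \<in> K)
      \<and> (\<forall>c. \<forall>x\<in>K. scaleC c x \<in> K) \<and> closed K"

definition hs_proj :: "'a::chilbert set \<Rightarrow> 'a \<Rightarrow> 'a" where
  "hs_proj K x = (THE y. y \<in> K \<and> (\<forall>k\<in>K. cinner (x - y) k = 0))"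

definition hs_positive :: "('a::chilbert \<Rightarrow> 'a) \<Rightarrow> bool" where
  "hs_positive D \<longleftrightarrow> hs_bounded D \<and> (\<forall>x. Im (cinner (D x) x) = 0 \<and> 0 \<le> Re (cinner (D x) x))"

definition hs_sqrt :: "('a::chilbert \<Rightarrow> 'a) \<Rightarrow> ('a \<Rightarrow> 'a)" where
  "hs_sqrt A = (THE D. hs_positive D \<and> D \<circ> D = A)"

definition defect :: "('a::chilbert \<Rightarrow> 'a) \<Rightarrow> ('a \<Rightarrow> 'a)" where
  "defect T = hs_sqrt (\<lambda>x. x - hs_adj T (T x))"

definition defect_star :: "('a::chilbert \<Rightarrow> 'a) \<Rightarrow> ('a \<Rightarrow> 'a)" where
  "defect_star T = hs_sqrt (\<lambda>x. x - T (hs_adj T x))"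

definition defect_space :: "('a::chilbert \<Rightarrow> 'a) \<Rightarrow> 'a set" where
  "defect_space T = closure (range (defect T))"

text \<open>Characteristic function
  Theta_T(z) = (-T + z D_{T*} (I - z T*)^{-1} D_T) restricted to the defect space;
  the value on vectors outside the defect space is irrelevant.\<close>
definition char_fun :: "('a::chilbert \<Rightarrow> 'a) \<Rightarrow> complex \<Rightarrow> 'a \<Rightarrow> 'a" where
  "char_fun T z x = - T x + scaleC z (defect_star T (inv (\<lambda>y. y - scaleC z (hs_adj T y)) (defect T x)))"

abbreviation unit_circle :: "complex set" where
  "unit_circle \<equiv> sphere 0 1"

definition borel_circle :: "complex set set" where
  "borel_circle = {\<Delta>. \<Delta> \<in> sets borel \<and> \<Delta> \<subseteq> unit_circle}"

text \<open>A generalized spectral measure on the closed subspace K: B maps Borel sets of the circle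
  to operators, of which only the restriction to K matters (bounded, positive operators on K).\<close>
definition gen_spectral_measure :: "'a::chilbert set \<Rightarrow> (complex set \<Rightarrow> 'a \<Rightarrow> 'a) \<Rightarrow> bool" where
  "gen_spectral_measure K B \<longleftrightarrow>
     (\<forall>\<Delta>\<in>borel_circle.
        (\<forall>k\<in>K. B \<Delta> k \<in> K)
      \<and> (\<forall>x\<in>K. \<forall>y\<in>K. B \<Delta> (x + y) = B \<Delta> x + B \<Delta> y)
      \<and> (\<forall>c. \<forall>x\<in>K. B \<Delta> (scaleC c x) = scaleC c (B \<Delta> x))
      \<and> (\<exists>C. \<forall>k\<in>K. norm (B \<Delta> k) \<le> C * norm k)
      \<and> (\<forall>k\<in>K. Im (cinner (B \<Delta> k) k) = 0 \<and> 0 \<le> Re (cinner (B \<Delta> k) k)))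
   \<and> (\<forall>k\<in>K. B {} k = 0)
   \<and> (\<forall>k\<in>K. B unit_circle k = k)
   \<and> (\<forall>A :: nat \<Rightarrow> complex set. range A \<subseteq> borel_circle \<longrightarrow> disjoint_family A \<longrightarrow>
        (\<forall>k\<in>K. (\<lambda>n. \<Sum>i<n. B (A i) k) \<longlonglongrightarrow> B (\<Union>(range A)) k))"

definition spectral_measure :: "(complex set \<Rightarrow> 'a::chilbert \<Rightarrow> 'a) \<Rightarrow> bool" where
  "spectral_measure E \<longleftrightarrow> gen_spectral_measure UNIV E \<and> (\<forall>\<Delta>\<in>borel_circle. E \<Delta> \<circ> E \<Delta> = E \<Delta>)"

definition opm_scalar :: "(complex set \<Rightarrow> 'a::chilbert \<Rightarrow> 'a) \<Rightarrow> 'a \<Rightarrow> complex measure" where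
  "opm_scalar B k = measure_of unit_circle borel_circle (\<lambda>\<Delta>. ennreal (Re (cinner (B \<Delta> k) k)))"

text \<open>Integral of f against the complex measure Delta |-> <B(Delta)k1,k2>, obtained by
  polarization: <B k1,k2> = 1/4 sum_{j<4} i^j <B(k1 + i^j k2), k1 + i^j k2>.\<close>
definition opm_integral ::
  "(complex set \<Rightarrow> 'a::chilbert \<Rightarrow> 'a) \<Rightarrow> (complex \<Rightarrow> complex) \<Rightarrow> 'a \<Rightarrow> 'a \<Rightarrow> complex" where
  "opm_integral B f k1 k2 =
     (1/4) * (\<Sum>j<4::nat. \<i> ^ j * integral\<^sup>L (opm_scalar B (k1 + scaleC (\<i> ^ j) k2)) f)"

end

theory Submission
  imports Defs
begin

text \<open>
  Let \<open>P\<close> be the projection onto \<open>K\<close> and \<open>S = (I - P)U\<close>.  Its adjoint is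
  \<open>S* = U*(I - P)\<close>, so \<open>D_S\<close> is the identity on \<open>U*K\<close>, \<open>D_S* = P\<close> and, for \<open>w \<in> U*K\<close>,
  \<open>\<Theta>_S(z) w = z P (I - zS*)\<^sup>-\<^sup>1 w\<close>.  Solving \<open>(U - \<Theta>_S(z)) w = k\<^sub>1\<close> explicitly shows that
  for \<open>k\<^sub>1, k\<^sub>2 \<in> K\<close> the Herglotz expression of \<open>B\<close> equals \<open>\<langle>(U + z)(U - z)\<^sup>-\<^sup>1 k\<^sub>1, k\<^sub>2\<rangle>\<close>,
  i.e. the Herglotz expression of \<open>E\<close>.  Hence for every \<open>k \<in> K\<close> the two finite scalar
  measures \<open>\<langle>B(\<cdot>)k,k\<rangle>\<close> and \<open>\<langle>E(\<cdot>)k,k\<rangle>\<close> on the circle have the same Herglotz transform.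
  Such measures coincide: the transform determines all moments \<open>\<integral> \<xi>\<^sup>a \<xi>\<^sup>-\<^sup>b\<close>, hence (Stone-Weierstrass)
  all integrals of continuous functions, hence the measures of closed sets, hence the measures.
  Finally \<open>\<langle>(B(\<Delta>) - P E(\<Delta>)) k, k\<rangle> = 0\<close> for all \<open>k \<in> K\<close>, and polarization gives \<open>B(\<Delta>) = P E(\<Delta>)\<close> on \<open>K\<close>.
\<close>

section \<open>Complex inner product spaces\<close>

lemma scaleC_zero_right [simp]: "scaleC c (0::'a::cvec) = 0"
proof -
  have "scaleC c 0 + scaleC c 0 = scaleC c (0 + 0::'a)" by (simp only: scaleC_add_right)
  then show ?thesis by simp
qed

lemma scaleC_zero_left [simp]: "scaleC 0 (x::'a::cvec) = 0"
proof -
  have "scaleC 0 x + scaleC 0 x = scaleC (0 + 0) x" by (simp only: scaleC_add_left)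
  then show ?thesis by simp
qed

lemma scaleC_minus_one [simp]: "scaleC (-1) (x::'a::cvec) = - x"
proof -
  have "scaleC (-1) x = scaleR (-1) x" by (simp add: scaleR_is_scaleC)
  then show ?thesis by simp
qed

lemma scaleC_minus_right: "scaleC c (- x) = - scaleC c (x::'a::cvec)"
proof -
  have "scaleC c (- x) + scaleC c x = scaleC c (-x + x)" by (simp only: scaleC_add_right)
  then show ?thesis by (simp add: eq_neg_iff_add_eq_0)
qed

lemma scaleC_diff_right: "scaleC c (x - y) = scaleC c x - scaleC c (y::'a::cvec)"
  by (simp only: diff_conv_add_uminus scaleC_add_right scaleC_minus_right)

lemma cinner_zero_left [simp]: "cinner 0 (y::'a::cinner_space) = 0"
proof -
  have "cinner 0 y + cinner 0 y = cinner (0 + 0) y" by (simp only: cinner_add_left)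
  then show ?thesis by simp
qed

lemma cinner_zero_right [simp]: "cinner (y::'a::cinner_space) 0 = 0"
  by (subst cinner_commute) simp

lemma cinner_add_right: "cinner (x::'a::cinner_space) (y + z) = cinner x y + cinner x z"
  by (subst (1 2 3) cinner_commute) (simp add: cinner_add_left)

lemma cinner_scaleC_right: "cinner (x::'a::cinner_space) (scaleC c y) = cnj c * cinner x y"
  by (subst (1 2) cinner_commute) (simp add: cinner_scaleC_left)

lemma cinner_minus_left: "cinner (- x) (y::'a::cinner_space) = - cinner x y"
proof -
  have "cinner (- x) y + cinner x y = cinner (-x + x) y" by (simp only: cinner_add_left)
  then show ?thesis by (simp add: eq_neg_iff_add_eq_0)
qed

lemma cinner_minus_right: "cinner x (- y::'a::cinner_space) = - cinner x y"
  by (subst (1 2) cinner_commute) (simp add: cinner_minus_left)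

lemma cinner_diff_left: "cinner (x - z) (y::'a::cinner_space) = cinner x y - cinner z y"
  by (simp only: diff_conv_add_uminus cinner_add_left cinner_minus_left)

lemma cinner_diff_right: "cinner x (y - z::'a::cinner_space) = cinner x y - cinner x z"
  by (simp only: diff_conv_add_uminus cinner_add_right cinner_minus_right)

lemma cinner_commute_zero: "cinner x y = 0 \<Longrightarrow> cinner y (x::'a::cinner_space) = 0"
  by (subst cinner_commute) simp

lemma cinner_self_real: "cinner x (x::'a::cinner_space) = complex_of_real ((norm x)^2)"
proof -
  have "Im (cinner x x) = 0" "0 \<le> Re (cinner x x)" using cinner_real_nonneg by auto
  moreover have "(norm x)^2 = Re (cinner x x)"
    using norm_eq_sqrt_cinner[of x] cinner_real_nonneg[of x] by simp
  ultimately show ?thesis by (simp add: complex_eq_iff)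
qed

lemma norm_sq_cinner: "(norm x)^2 = Re (cinner x (x::'a::cinner_space))"
  using cinner_self_real[of x] by simp

lemma cinner_ext: "(\<And>y. cinner x y = cinner x' y) \<Longrightarrow> (x::'a::cinner_space) = x'"
proof -
  assume h: "\<And>y. cinner x y = cinner x' y"
  have "cinner (x - x') (x - x') = cinner x (x - x') - cinner x' (x - x')" by (rule cinner_diff_left)
  also have "\<dots> = 0" by (simp only: h diff_self)
  finally have "x - x' = 0" using cinner_eq_zero_iff by blast
  then show ?thesis by simp
qed

lemma cinner_ext_right: "(\<And>x. cinner x y = cinner x y') \<Longrightarrow> (y::'a::cinner_space) = y'"
proof (rule cinner_ext)
  fix x assume "\<And>x. cinner x y = cinner x y'"
  then show "cinner y x = cinner y' x" by (subst (1 2) cinner_commute) simp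
qed

lemma norm_scaleC: "norm (scaleC c (x::'a::cinner_space)) = cmod c * norm x"
proof -
  have "cinner (scaleC c x) (scaleC c x) = cnj c * (c * cinner x x)"
    by (simp only: cinner_scaleC_left cinner_scaleC_right)
  also have "\<dots> = complex_of_real ((cmod c)^2 * (norm x)^2)"
    by (simp only: mult.assoc[symmetric] mult.commute[of "cnj c" c] cinner_self_real
        complex_mult_cnj of_real_mult cmod_power2)
  finally have "(norm (scaleC c x))^2 = (cmod c * norm x)^2"
    by (simp only: norm_sq_cinner Re_complex_of_real power_mult_distrib)
  then show ?thesis by (simp add: power2_eq_iff_nonneg)
qed

lemma cinner_add_sq:
  "cinner (x+y) (x+y) = cinner x x + cinner x y + cinner y x + cinner y (y::'a::cinner_space)"
  by (simp only: cinner_add_left cinner_add_right ac_simps)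

lemma cinner_diff_sq:
  "cinner (x-y) (x-y) = cinner x x - cinner x y - cinner y x + cinner y (y::'a::cinner_space)"
  by (simp only: cinner_diff_left cinner_diff_right) (simp add: algebra_simps)

lemma pythagoras:
  "cinner x y = 0 \<Longrightarrow> (norm (x + y))^2 = (norm x)^2 + (norm (y::'a::cinner_space))^2"
  using cinner_commute_zero[of x y] by (simp only: norm_sq_cinner cinner_add_sq) simp

lemma parallelogram:
  "(norm (x + y))^2 + (norm (x - y))^2 = 2*(norm x)^2 + 2*(norm (y::'a::cinner_space))^2"
  by (simp only: norm_sq_cinner cinner_add_sq cinner_diff_sq) simp

text \<open>Apollonius' identity: the parallelogram law seen from a point \<open>x\<close> and the midpoint of \<open>a, b\<close>.
  It drives the existence of nearest points in closed subspaces.\<close>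
lemma apollonius:
  fixes x a b :: "'a::cinner_space"
  shows "(norm (a - b))^2
    = 2*(norm (x - a))^2 + 2*(norm (x - b))^2 - 4*(norm (x - scaleR (1/2) (a + b)))^2"
proof -
  have "(x - a) + (x - b) = scaleR 2 (x - scaleR (1/2) (a + b))"
    by (simp add: algebra_simps scaleR_2)
  then have "(norm ((x - a) + (x - b)))^2 = 4 * (norm (x - scaleR (1/2) (a + b)))^2"
    by (simp add: power_mult_distrib)
  moreover have "norm ((x - a) - (x - b)) = norm (a - b)" by (simp add: norm_minus_commute)
  ultimately show ?thesis using parallelogram[of "x - a" "x - b"] by simp
qed

text \<open>Polarization makes \<open>y \<mapsto> Re \<langle>y, k\<rangle>\<close> continuous, being a combination of norms.\<close>
lemma re_cinner_polar: "Re (cinner x y) = ((norm (x + y))^2 - (norm (x - y))^2) / 4"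
proof -
  have "Re (cinner y x) = Re (cinner x y)" by (subst cinner_commute) simp
  then show ?thesis by (simp only: norm_sq_cinner cinner_add_sq cinner_diff_sq) simp
qed

lemma continuous_re_cinner: "continuous_on UNIV (\<lambda>y. Re (cinner y (k::'a::cinner_space)))"
  unfolding re_cinner_polar by (intro continuous_intros) auto

lemma re_cinner_sum:
  "Re (cinner (\<Sum>i<(n::nat). y i) k) = (\<Sum>i<n. Re (cinner (y i) (k::'a::cinner_space)))"
  by (induction n) (simp_all add: cinner_add_left)

lemma polarization_zero:
  fixes C :: "'a::chilbert \<Rightarrow> 'a"
  assumes K: "hs_closed_subspace K"
    and add: "\<And>x y. x \<in> K \<Longrightarrow> y \<in> K \<Longrightarrow> C (x + y) = C x + C y"
    and sc: "\<And>c x. x \<in> K \<Longrightarrow> C (scaleC c x) = scaleC c (C x)"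
    and diag: "\<And>x. x \<in> K \<Longrightarrow> cinner (C x) x = 0"
    and x: "x \<in> K" and y: "y \<in> K"
  shows "cinner (C x) y = 0"
proof -
  have iy: "scaleC \<i> y \<in> K" and xy: "x + y \<in> K" and xiy: "x + scaleC \<i> y \<in> K"
    using K x y unfolding hs_closed_subspace_def by blast+
  define a where "a = cinner (C x) y"
  define b where "b = cinner (C y) x"
  have "0 = cinner (C (x + y)) (x + y)" using diag[OF xy] by simp
  also have "\<dots> = cinner (C x) x + a + b + cinner (C y) y"
    unfolding a_def b_def add[OF x y] by (simp only: cinner_add_left cinner_add_right ac_simps)
  finally have e1: "a + b = 0" using diag[OF x] diag[OF y] by simp
  have "0 = cinner (C (x + scaleC \<i> y)) (x + scaleC \<i> y)" using diag[OF xiy] by simp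
  also have "\<dots> = cinner (C x) x + cnj \<i> * a + \<i> * b + \<i> * (cnj \<i> * cinner (C y) y)"
    unfolding a_def b_def add[OF x iy] sc[OF y]
    by (simp only: cinner_add_left cinner_add_right cinner_scaleC_left cinner_scaleC_right ac_simps)
      (simp add: algebra_simps)
  finally have e2: "- \<i> * a + \<i> * b = 0" using diag[OF x] diag[OF y] by simp
  have "b = - a" using e1 by (simp add: add_eq_0_iff)
  then have "- (2 * \<i>) * a = 0" using e2 by (simp add: algebra_simps)
  then show ?thesis unfolding a_def by simp
qed

section \<open>Orthogonal projections\<close>

lemma closed_subspace_scaleR: "hs_closed_subspace K \<Longrightarrow> x \<in> K \<Longrightarrow> scaleR r x \<in> K"
  unfolding hs_closed_subspace_def by (simp add: scaleR_is_scaleC)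

lemma closed_subspace_diff: "hs_closed_subspace K \<Longrightarrow> x \<in> K \<Longrightarrow> y \<in> K \<Longrightarrow> x - y \<in> K"
  unfolding hs_closed_subspace_def by (metis diff_conv_add_uminus scaleC_minus_one)

lemma orthogonal_if_minimal:
  fixes r k :: "'a::cinner_space"
  assumes "\<And>t. norm r \<le> norm (r - scaleC t k)"
  shows "cinner r k = 0"
proof (cases "k = 0")
  case True then show ?thesis by simp
next
  case False
  define a where "a = cinner r k"
  define n where "n = (norm k)^2"
  have n0: "n > 0" using False by (simp add: n_def)
  define t where "t = a / complex_of_real n"
  have kk: "cinner k k = complex_of_real n" by (simp add: n_def cinner_self_real)
  have kr: "cinner k r = cnj a" unfolding a_def by (subst cinner_commute) simp
  have "cinner (r - scaleC t k) (r - scaleC t k)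
      = cinner r r - cnj t * a - t * cnj a + t * cnj t * complex_of_real n"
    by (simp add: cinner_diff_sq cinner_scaleC_left cinner_scaleC_right kk kr a_def[symmetric] ac_simps)
  also have "\<dots> = cinner r r - complex_of_real ((cmod a)^2 / n)"
  proof -
    have "a * cnj a = complex_of_real (cmod a) * complex_of_real (cmod a)"
      by (simp only: complex_norm_square[symmetric] power2_eq_square of_real_mult)
    then show ?thesis using n0 unfolding t_def by (simp add: field_simps power2_eq_square)
  qed
  finally have "(norm (r - scaleC t k))^2 = (norm r)^2 - (cmod a)^2 / n"
    by (simp add: norm_sq_cinner)
  moreover have "(norm r)^2 \<le> (norm (r - scaleC t k))^2"
    using assms[of t] by (simp add: power_mono)
  ultimately have "(cmod a)^2 / n \<le> 0" by linarith
  then show ?thesis using n0 unfolding a_def[symmetric] by (simp add: divide_le_0_iff)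
qed

lemma Cauchy_if_sq_dist_le:
  fixes y :: "nat \<Rightarrow> 'a::real_normed_vector"
  assumes close: "\<And>n m. (norm (y n - y m))^2 \<le> 2 * inverse (real (Suc n)) + 2 * inverse (real (Suc m))"
  shows "Cauchy y"
proof (rule metric_CauchyI)
  fix eps :: real assume eps: "0 < eps"
  obtain N where N: "inverse (real (Suc N)) < eps^2 / 4" using reals_Archimedean[of "eps^2 / 4"] eps by auto
  have "dist (y m) (y n) < eps" if "N \<le> m" "N \<le> n" for m n
  proof -
    have "inverse (real (Suc m)) \<le> inverse (real (Suc N))" "inverse (real (Suc n)) \<le> inverse (real (Suc N))"
      using that by (auto simp: field_simps)
    then have "(norm (y m - y n))^2 < eps^2" using close[of m n] N by linarith
    then show ?thesis using eps by (simp add: dist_norm power_less_imp_less_base)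
  qed
  then show "\<exists>M. \<forall>m\<ge>M. \<forall>n\<ge>M. dist (y m) (y n) < eps" by blast
qed

text \<open>Every closed subspace of a Hilbert space contains a nearest point to any given vector:
  a minimizing sequence is Cauchy by Apollonius' identity.\<close>
lemma nearest_point_exists:
  fixes x :: "'a::chilbert"
  assumes K: "hs_closed_subspace K"
  obtains l where "l \<in> K" "\<And>k. k \<in> K \<Longrightarrow> norm (x - l) \<le> norm (x - k)"
proof -
  have K0: "0 \<in> K" and Kcl: "closed K" using K unfolding hs_closed_subspace_def by auto
  have mid: "a \<in> K \<Longrightarrow> b \<in> K \<Longrightarrow> scaleR (1/2) (a + b) \<in> K" for a b
    using K by (simp add: closed_subspace_scaleR hs_closed_subspace_def)
  define D where "D = (\<lambda>k. (norm (x - k))^2) ` K"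
  define d where "d = Inf D"
  have Dne: "D \<noteq> {}" using K0 by (auto simp: D_def)
  have bdd: "bdd_below D" unfolding D_def by (rule bdd_belowI[of _ 0]) auto
  have dle: "d \<le> (norm (x - k))^2" if "k \<in> K" for k
    unfolding d_def by (rule cInf_lower[OF _ bdd]) (use that in \<open>auto simp: D_def\<close>)
  define e where "e = (\<lambda>n::nat. inverse (real (Suc n)))"
  have "\<exists>k\<in>K. (norm (x - k))^2 < d + e n" for n
  proof -
    have "Inf D < d + e n" unfolding d_def e_def by simp
    then show ?thesis using cInf_lessD[OF Dne] by (auto simp: D_def)
  qed
  then obtain y where yK: "\<And>n. y n \<in> K" and yd: "\<And>n. (norm (x - y n))^2 < d + e n"
    by metis
  have close: "(norm (y n - y m))^2 \<le> 2 * e n + 2 * e m" for n m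
  proof -
    have "d \<le> (norm (x - scaleR (1/2) (y n + y m)))^2" by (rule dle) (rule mid[OF yK yK])
    then show ?thesis using apollonius[of "y n" "y m" x] yd[of n] yd[of m] by linarith
  qed
  have "Cauchy y" by (rule Cauchy_if_sq_dist_le) (use close in \<open>simp add: e_def\<close>)
  then obtain l where yl: "y \<longlonglongrightarrow> l" using Cauchy_convergent_iff convergent_def by blast
  have lK: "l \<in> K" using closed_sequentially[OF Kcl] yK yl by blast
  have "(\<lambda>n. (norm (x - y n))^2) \<longlonglongrightarrow> (norm (x - l))^2" by (intro tendsto_intros yl)
  moreover have "(\<lambda>n. d + e n) \<longlonglongrightarrow> d + 0"
    unfolding e_def by (intro tendsto_intros LIMSEQ_inverse_real_of_nat)
  ultimately have "(norm (x - l))^2 \<le> d" using yd by (intro LIMSEQ_le) (auto intro: less_imp_le)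
  then have "(norm (x - l))^2 \<le> (norm (x - k))^2" if "k \<in> K" for k using dle[OF that] by linarith
  then show ?thesis using that lK by (simp add: power2_le_iff_abs_le)
qed

lemma proj_exists:
  fixes x :: "'a::chilbert"
  assumes K: "hs_closed_subspace K"
  shows "\<exists>y\<in>K. \<forall>k\<in>K. cinner (x - y) k = 0"
proof -
  obtain l where lK: "l \<in> K" and near: "\<And>k. k \<in> K \<Longrightarrow> norm (x - l) \<le> norm (x - k)"
    using nearest_point_exists[OF K] by blast
  have "cinner (x - l) k = 0" if k: "k \<in> K" for k
  proof (rule orthogonal_if_minimal)
    fix t
    have "l + scaleC t k \<in> K" using K lK k unfolding hs_closed_subspace_def by blast
    then show "norm (x - l) \<le> norm (x - l - scaleC t k)" using near by (simp add: algebra_simps)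
  qed
  then show ?thesis using lK by blast
qed

lemma proj_unique:
  fixes x :: "'a::chilbert"
  assumes K: "hs_closed_subspace K" and y: "y \<in> K" and o: "\<forall>k\<in>K. cinner (x - y) k = 0"
  shows "hs_proj K x = y"
  unfolding hs_proj_def
proof (rule the_equality)
  show "y \<in> K \<and> (\<forall>k\<in>K. cinner (x - y) k = 0)" using y o by blast
next
  fix y' assume y': "y' \<in> K \<and> (\<forall>k\<in>K. cinner (x - y') k = 0)"
  have d: "y - y' \<in> K" using closed_subspace_diff[OF K y] y' by blast
  have "cinner (y - y') (y - y') = cinner (x - y') (y - y') - cinner (x - y) (y - y')"
    by (simp add: cinner_diff_left[symmetric])
  also have "\<dots> = 0" using o y' d by simp
  finally have "y - y' = 0" using cinner_eq_zero_iff by blast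
  then show "y' = y" by simp
qed

lemma proj_props:
  fixes x :: "'a::chilbert"
  assumes K: "hs_closed_subspace K"
  shows proj_in: "hs_proj K x \<in> K" and proj_orth: "\<And>k. k \<in> K \<Longrightarrow> cinner (x - hs_proj K x) k = 0"
proof -
  obtain y where "y \<in> K" "\<forall>k\<in>K. cinner (x - y) k = 0" using proj_exists[OF K] by blast
  moreover from this have "hs_proj K x = y" by (rule proj_unique[OF K])
  ultimately show "hs_proj K x \<in> K" "\<And>k. k \<in> K \<Longrightarrow> cinner (x - hs_proj K x) k = 0" by auto
qed

lemma proj_fix: "hs_closed_subspace K \<Longrightarrow> (k::'a::chilbert) \<in> K \<Longrightarrow> hs_proj K k = k"
  by (rule proj_unique) auto

lemma proj_idem: "hs_closed_subspace K \<Longrightarrow> hs_proj K (hs_proj K (x::'a::chilbert)) = hs_proj K x"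
  by (rule proj_fix) (auto intro: proj_in)

lemma proj_clinear:
  assumes K: "hs_closed_subspace K"
  shows "hs_clinear (hs_proj K :: 'a::chilbert \<Rightarrow> 'a)"
  unfolding hs_clinear_def
proof (intro conjI allI)
  fix x y :: 'a
  show "hs_proj K (x + y) = hs_proj K x + hs_proj K y"
  proof (rule proj_unique[OF K])
    show "hs_proj K x + hs_proj K y \<in> K" using K proj_in[OF K] unfolding hs_closed_subspace_def by blast
    have eq: "x + y - (hs_proj K x + hs_proj K y) = (x - hs_proj K x) + (y - hs_proj K y)" by simp
    show "\<forall>k\<in>K. cinner (x + y - (hs_proj K x + hs_proj K y)) k = 0"
      unfolding eq cinner_add_left using proj_orth[OF K] by simp
  qed
next
  fix c and x :: 'a
  show "hs_proj K (scaleC c x) = scaleC c (hs_proj K x)"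
  proof (rule proj_unique[OF K])
    show "scaleC c (hs_proj K x) \<in> K" using K proj_in[OF K] unfolding hs_closed_subspace_def by blast
    show "\<forall>k\<in>K. cinner (scaleC c x - scaleC c (hs_proj K x)) k = 0"
      using proj_orth[OF K] by (simp add: scaleC_diff_right[symmetric] cinner_scaleC_left)
  qed
qed

lemma proj_selfadj:
  fixes x y :: "'a::chilbert"
  assumes K: "hs_closed_subspace K"
  shows "cinner (hs_proj K x) y = cinner x (hs_proj K y)"
proof -
  have "cinner (hs_proj K x) (y - hs_proj K y) = 0"
    using proj_orth[OF K proj_in[OF K]] by (rule cinner_commute_zero)
  moreover have "cinner (x - hs_proj K x) (hs_proj K y) = 0" by (rule proj_orth[OF K proj_in[OF K]])
  ultimately show ?thesis by (simp add: cinner_diff_left cinner_diff_right)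
qed

text \<open>Both \<open>P\<close> and \<open>I - P\<close> are contractions (Pythagoras for \<open>x = Px + (x - Px)\<close>).\<close>
lemma proj_norm:
  fixes x :: "'a::chilbert"
  assumes K: "hs_closed_subspace K"
  shows "norm (hs_proj K x) \<le> norm x" "norm (x - hs_proj K x) \<le> norm x"
proof -
  have "(norm (hs_proj K x + (x - hs_proj K x)))^2 = (norm (hs_proj K x))^2 + (norm (x - hs_proj K x))^2"
    by (rule pythagoras) (rule cinner_commute_zero[OF proj_orth[OF K proj_in[OF K]]])
  then have "(norm (hs_proj K x))^2 \<le> (norm x)^2" "(norm (x - hs_proj K x))^2 \<le> (norm x)^2"
    by simp_all
  then show "norm (hs_proj K x) \<le> norm x" "norm (x - hs_proj K x) \<le> norm x"
    by (simp_all add: power2_le_iff_abs_le)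
qed

lemma clinear_add: "hs_clinear f \<Longrightarrow> f (x + y) = f x + f y"
  unfolding hs_clinear_def by blast

lemma clinear_scaleC: "hs_clinear f \<Longrightarrow> f (scaleC c x) = scaleC c (f x)"
  unfolding hs_clinear_def by blast

lemma clinear_diff: "hs_clinear f \<Longrightarrow> f (x - y) = f x - (f y::'b::cvec)"
  using clinear_add[of f x "- y"] clinear_scaleC[of f "-1" y] by (simp only: diff_conv_add_uminus) simp

lemma hs_adj_eq:
  fixes T :: "'a::chilbert \<Rightarrow> 'a"
  assumes "\<And>x y. cinner (T x) y = cinner x (T' y)"
  shows "hs_adj T = T'"
  unfolding hs_adj_def
proof (rule the_equality)
  show "\<forall>x y. cinner (T x) y = cinner x (T' y)" using assms by blast
next
  fix T'' assume h: "\<forall>x y. cinner (T x) y = cinner x (T'' y)"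
  show "T'' = T'"
    by (rule ext, rule cinner_ext_right) (use h assms in metis)
qed

lemma positive_selfadj:
  fixes D :: "'a::chilbert \<Rightarrow> 'a"
  assumes D: "hs_positive D"
  shows "cinner (D x) y = cinner x (D y)"
proof -
  have D_lin: "hs_clinear D" using D unfolding hs_positive_def hs_bounded_def by blast
  have im: "\<And>v. Im (cinner (D v) v) = 0" using D unfolding hs_positive_def by blast
  define a where "a = cinner (D x) y"
  define b where "b = cinner (D y) x"
  have e1: "cinner (D (x + y)) (x + y) = cinner (D x) x + a + b + cinner (D y) y"
    unfolding a_def b_def by (simp only: clinear_add[OF D_lin] cinner_add_left cinner_add_right ac_simps)
  have e2: "cinner (D (x + scaleC \<i> y)) (x + scaleC \<i> y)
      = cinner (D x) x - \<i> * a + \<i> * b + cinner (D y) y"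
    unfolding a_def b_def
    by (simp only: clinear_add[OF D_lin] clinear_scaleC[OF D_lin] cinner_add_left cinner_add_right
        cinner_scaleC_left cinner_scaleC_right) (simp add: algebra_simps)
  have "Im (a + b) = 0" using im[of "x + y"] im[of x] im[of y] unfolding e1 by simp
  moreover have "Re (b - a) = 0" using im[of "x + scaleC \<i> y"] im[of x] im[of y] unfolding e2 by simp
  ultimately have "b = cnj a" by (simp add: complex_eq_iff)
  then have "cinner x (D y) = a" unfolding b_def by (subst cinner_commute) simp
  then show ?thesis unfolding a_def by simp
qed

text \<open>A projection (idempotent, self-adjoint, contractive) is its own positive square root;
  this computes both defect operators of the compression.\<close>
lemma sqrt_proj:
  fixes A :: "'a::chilbert \<Rightarrow> 'a"
  assumes linA: "hs_clinear A" and bA: "\<And>x. norm (A x) \<le> norm x"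
    and idem: "\<And>x. A (A x) = A x" and sa: "\<And>x y. cinner (A x) y = cinner x (A y)"
  shows "hs_sqrt A = A"
  unfolding hs_sqrt_def
proof (rule the_equality)
  have AA: "\<And>x. cinner (A x) x = cinner (A x) (A x)" by (metis idem sa)
  then show "hs_positive A \<and> A \<circ> A = A"
    unfolding hs_positive_def hs_bounded_def
    using linA bA cinner_real_nonneg by (auto simp: o_def idem intro!: exI[of _ 1])
  fix D assume h: "hs_positive D \<and> D \<circ> D = A"
  from h have Dp: "hs_positive D" and DD: "\<And>x. D (D x) = A x" by (auto simp: fun_eq_iff)
  have linD: "hs_clinear D" using Dp unfolding hs_positive_def hs_bounded_def by blast
  have DA: "D (A x) = A (D x)" for x using DD[of "D x"] DD[of x] by simp
  show "D = A"
  proof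
    fix x
    define u where "u = D x - A x"
    have "D u + A u = 0"
      unfolding u_def by (simp add: clinear_diff[OF linD] clinear_diff[OF linA] DD DA idem)
    then have sum0: "cinner (D u) u + cinner (A u) u = 0"
      by (simp only: cinner_add_left[symmetric]) simp
    have "Re (cinner (D u) u) + Re (cinner (A u) u) = 0" using arg_cong[OF sum0, of Re] by simp
    moreover have "0 \<le> Re (cinner (D u) u)" using Dp unfolding hs_positive_def by blast
    moreover have "Re (cinner (A u) u) = (norm (A u))^2" using AA[of u] by (simp add: norm_sq_cinner)
    ultimately have "(norm (A u))^2 \<le> 0" by linarith
    then have Au: "A u = 0" by simp
    then have Du: "D u = 0" using \<open>D u + A u = 0\<close> by simp
    have "cinner u u = cinner x (D u) - cinner x (A u)"
      unfolding u_def cinner_diff_left using positive_selfadj[OF Dp] sa by simp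
    then have "cinner u u = 0" using Au Du by simp
    then have "u = 0" using cinner_eq_zero_iff by blast
    then show "D x = A x" unfolding u_def by simp
  qed
qed

text \<open>For a linear contraction \<open>T\<close> and \<open>|z| < 1\<close>, \<open>I - zT\<close> is bijective (Banach fixed point).\<close>
lemma contraction_bij:
  fixes T :: "'a::chilbert \<Rightarrow> 'a"
  assumes linT: "hs_clinear T" and bT: "\<And>x. norm (T x) \<le> norm x" and z: "cmod z < 1"
  shows "bij (\<lambda>x. x - scaleC z (T x))"
proof -
  have lip: "norm (scaleC z (T x) - scaleC z (T y)) \<le> cmod z * norm (x - y)" for x y
  proof -
    have "scaleC z (T x) - scaleC z (T y) = scaleC z (T (x - y))"
      by (simp add: clinear_diff[OF linT] scaleC_diff_right)
    then show ?thesis by (simp add: norm_scaleC bT mult_left_mono)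
  qed
  show ?thesis
    unfolding bij_def
  proof
    show "inj (\<lambda>x. x - scaleC z (T x))"
    proof (rule injI)
      fix x y assume "x - scaleC z (T x) = y - scaleC z (T y)"
      then have "x - y = scaleC z (T x) - scaleC z (T y)" by (simp add: algebra_simps)
      then have "norm (x - y) \<le> cmod z * norm (x - y)" using lip by metis
      then have "norm (x - y) = 0" using z
        by (metis mult_le_cancel_right1 norm_ge_zero not_less order.antisym)
      then show "x = y" by simp
    qed
  next
    show "surj (\<lambda>x. x - scaleC z (T x))"
    proof (rule surjI)
      fix w
      have "\<exists>!v. w + scaleC z (T v) = v"
        by (rule banach_fix_type[of "cmod z"]) (use z lip in \<open>auto simp: dist_norm\<close>)
      then obtain v where "w + scaleC z (T v) = v" by blast
      then show "(SOME v. v - scaleC z (T v) = w) - scaleC z (T (SOME v. v - scaleC z (T v) = w)) = w"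
        by (metis (mono_tags, lifting) add_diff_cancel someI_ex)
    qed
  qed
qed

locale unitary_operator =
  fixes U :: "'a::chilbert \<Rightarrow> 'a"
  assumes unitary: "hs_unitary U"
begin

lemma U_lin: "hs_clinear U" using unitary unfolding hs_unitary_def hs_bounded_def by blast
lemma U_bij: "bij U" using unitary unfolding hs_unitary_def by blast
lemma U_isometric: "cinner (U x) (U y) = cinner x y" using unitary unfolding hs_unitary_def by blast
lemma U_Ui: "U (inv U y) = y" using U_bij by (simp add: bij_def surj_f_inv_f)
lemma Ui_U: "inv U (U x) = x" using U_bij by (simp add: bij_def inv_f_f)

lemma U_norm: "norm (U x) = norm x"
proof -
  have "(norm (U x))^2 = (norm x)^2" by (simp add: norm_sq_cinner U_isometric)
  then show ?thesis by (simp add: power2_eq_iff_nonneg)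
qed

lemma Ui_norm: "norm (inv U y) = norm y" using U_norm[of "inv U y"] by (simp add: U_Ui)

lemma Ui_lin: "hs_clinear (inv U)"
  unfolding hs_clinear_def
proof (intro conjI allI)
  fix x y show "inv U (x + y) = inv U x + inv U y"
    by (metis U_Ui Ui_U clinear_add[OF U_lin])
next
  fix c x show "inv U (scaleC c x) = scaleC c (inv U x)"
    by (metis U_Ui Ui_U clinear_scaleC[OF U_lin])
qed

lemma adj_eq: "cinner (U x) y = cinner x (inv U y)"
  using U_isometric[of x "inv U y"] by (simp add: U_Ui)

lemma adj: "hs_adj U = inv U"
  by (rule hs_adj_eq) (rule adj_eq)

text \<open>The resolvent-type operator \<open>U - z\<close> is bijective for \<open>|z| < 1\<close>, since \<open>U - z = U(I - zU*)\<close>.\<close>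
lemma shifted_bij:
  assumes z: "cmod z < 1"
  shows "bij (\<lambda>x. U x - scaleC z x)"
proof -
  have "(\<lambda>x. U x - scaleC z x) = U \<circ> (\<lambda>x. x - scaleC z (inv U x))"
    by (rule ext) (simp add: clinear_diff[OF U_lin] clinear_scaleC[OF U_lin] U_Ui)
  moreover have "bij (\<lambda>x. x - scaleC z (inv U x))"
    by (rule contraction_bij[OF Ui_lin _ z]) (simp add: Ui_norm)
  ultimately show ?thesis using U_bij by (simp add: bij_comp)
qed

end

section \<open>The compression \<open>S = (I - P)U\<close> and its characteristic function\<close>

locale compression = unitary_operator U for U :: "'a::chilbert \<Rightarrow> 'a" +
  fixes K :: "'a set"
  assumes K: "hs_closed_subspace K"
begin

abbreviation "P \<equiv> hs_proj K"

definition S :: "'a \<Rightarrow> 'a" where "S = (\<lambda>x. U x - P (U x))"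

lemma Pin: "P x \<in> K" using proj_in[OF K] .
lemma Porth: "k \<in> K \<Longrightarrow> cinner (x - P x) k = 0" using proj_orth[OF K] .
lemma Pfix: "k \<in> K \<Longrightarrow> P k = k" using proj_fix[OF K] .
lemma Pidem: "P (P x) = P x" using proj_idem[OF K] .
lemma Plin: "hs_clinear P" using proj_clinear[OF K] .
lemma Psa: "cinner (P x) y = cinner x (P y)" using proj_selfadj[OF K] .

lemma S_adj: "hs_adj S = (\<lambda>y. inv U (y - P y))"
proof (rule hs_adj_eq)
  fix x y
  have "cinner (S x) y = cinner (U x) (y - P y)"
    unfolding S_def by (simp add: cinner_diff_left cinner_diff_right Psa)
  also have "\<dots> = cinner x (inv U (y - P y))" by (rule adj_eq)
  finally show "cinner (S x) y = cinner x (inv U (y - P y))" .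
qed

lemma S_adj_lin: "hs_clinear (hs_adj S)"
  unfolding S_adj hs_clinear_def
proof (intro conjI allI)
  fix x y
  have "x + y - P (x + y) = (x - P x) + (y - P y)" by (simp add: clinear_add[OF Plin])
  then show "inv U (x + y - P (x + y)) = inv U (x - P x) + inv U (y - P y)"
    by (simp only: clinear_add[OF Ui_lin])
next
  fix c x
  have "scaleC c x - P (scaleC c x) = scaleC c (x - P x)"
    by (simp add: clinear_scaleC[OF Plin] scaleC_diff_right)
  then show "inv U (scaleC c x - P (scaleC c x)) = scaleC c (inv U (x - P x))"
    by (simp only: clinear_scaleC[OF Ui_lin])
qed

text \<open>\<open>I - S*S = U* P U\<close> is a projection, so \<open>D_S = U* P U\<close>, the identity on \<open>U* K\<close>.\<close>
lemma defect_S: "U x \<in> K \<Longrightarrow> defect S x = x"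
proof -
  assume x: "U x \<in> K"
  define Q where "Q = (\<lambda>x. inv U (P (U x)))"
  have eq: "(\<lambda>x. x - hs_adj S (S x)) = Q"
  proof
    fix x
    have "P (S x) = 0" unfolding S_def by (simp add: clinear_diff[OF Plin] Pidem)
    then have "hs_adj S (S x) = inv U (U x - P (U x))" unfolding S_adj by (simp add: S_def)
    then show "x - hs_adj S (S x) = Q x" unfolding Q_def by (simp add: clinear_diff[OF Ui_lin] Ui_U)
  qed
  have "hs_sqrt Q = Q"
  proof (rule sqrt_proj)
    show "hs_clinear Q" unfolding Q_def hs_clinear_def
      by (simp add: clinear_add[OF U_lin] clinear_add[OF Ui_lin] clinear_add[OF Plin]
          clinear_scaleC[OF U_lin] clinear_scaleC[OF Ui_lin] clinear_scaleC[OF Plin])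
    show "norm (Q x) \<le> norm x" for x unfolding Q_def using proj_norm(1)[OF K, of "U x"] by (simp add: Ui_norm U_norm)
    show "Q (Q x) = Q x" for x unfolding Q_def by (simp add: U_Ui Pidem)
    show "cinner (Q x) y = cinner x (Q y)" for x y
    proof -
      have "cinner (Q x) y = cinner (P (U x)) (U y)" unfolding Q_def using U_isometric[of "Q x" y] by (simp add: Q_def U_Ui)
      also have "\<dots> = cinner (U x) (P (U y))" by (rule Psa)
      finally show ?thesis unfolding Q_def by (simp add: adj_eq)
    qed
  qed
  then have "defect S = Q" unfolding defect_def eq .
  then show ?thesis using x by (simp add: Q_def Pfix Ui_U)
qed

text \<open>\<open>I - SS* = P\<close>, hence \<open>D_S* = P\<close>.\<close>
lemma defect_star_S: "defect_star S = P"
proof -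
  have "(\<lambda>x. x - S (hs_adj S x)) = P"
    unfolding S_adj by (rule ext) (simp add: S_def U_Ui clinear_diff[OF Plin] Pidem)
  moreover have "hs_sqrt P = P" by (rule sqrt_proj[OF Plin proj_norm(1)[OF K] Pidem Psa])
  ultimately show ?thesis unfolding defect_star_def by simp
qed

text \<open>\<open>R z = I - zS*\<close>, invertible for \<open>|z| < 1\<close> since \<open>S*\<close> is a contraction.\<close>
abbreviation R :: "complex \<Rightarrow> 'a \<Rightarrow> 'a" where "R z \<equiv> (\<lambda>y. y - scaleC z (hs_adj S y))"

lemma R_bij: "cmod z < 1 \<Longrightarrow> bij (R z)"
  by (rule contraction_bij[OF S_adj_lin]) (simp_all add: S_adj Ui_norm proj_norm(2)[OF K])

lemma U_R: "U (R z y) = U y - scaleC z (y - P y)"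
  unfolding S_adj by (simp add: clinear_diff[OF U_lin] clinear_scaleC[OF U_lin] U_Ui)

text \<open>On \<open>U* K\<close> (where \<open>S\<close> vanishes and \<open>D_S = I\<close>) the characteristic function is \<open>zP(I - zS*)\<^sup>-\<^sup>1\<close>.\<close>
lemma char_fun_on:
  assumes "U x \<in> K"
  shows "char_fun S z x = scaleC z (P (inv (R z) x))"
proof -
  have "S x = 0" unfolding S_def using assms by (simp add: Pfix)
  then show ?thesis unfolding char_fun_def defect_star_S using defect_S[OF assms] by simp
qed

text \<open>For \<open>k \<in> K\<close> with \<open>v = (U - z)\<^sup>-\<^sup>1 k\<close>, the unique \<open>w \<in> U* K\<close> with \<open>(U - \<Theta>_S(z)) w = k\<close>
  is \<open>w = (I - zS*) v\<close>; it satisfies \<open>Uw = k + zPv\<close> and \<open>\<Theta>_S(z) w = zPv\<close>.\<close>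
lemma char_fun_solution:
  assumes z: "cmod z < 1" and k: "k \<in> K"
    and v: "U v - scaleC z v = k"
  shows "inv_into (hs_adj U ` K) (\<lambda>x. U x - char_fun S z x) k = R z v"
    and "U (R z v) = k + scaleC z (P v)"
    and "char_fun S z (R z v) = scaleC z (P v)"
proof -
  have Rb: "bij (R z)" by (rule R_bij[OF z])
  have inj_shift: "inj (\<lambda>x. U x - scaleC z x)" using shifted_bij[OF z] by (rule bij_is_inj)
  have Uv: "U v = k + scaleC z v" using v by (simp add: algebra_simps)
  show Uw: "U (R z v) = k + scaleC z (P v)"
    unfolding U_R Uv by (simp add: scaleC_diff_right algebra_simps)
  have UwK: "U (R z v) \<in> K" unfolding Uw using K k Pin unfolding hs_closed_subspace_def by blast
  show chw: "char_fun S z (R z v) = scaleC z (P v)"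
    using char_fun_on[OF UwK] inv_f_f[OF bij_is_inj[OF Rb]] by simp
  have wA: "R z v \<in> hs_adj U ` K" unfolding adj using UwK Ui_U by (metis image_eqI)
  have uniq: "x = R z v" if x: "x \<in> hs_adj U ` K" "U x - char_fun S z x = k" for x
  proof -
    have UxK: "U x \<in> K" using x(1) unfolding adj by (auto simp: U_Ui)
    define v' where "v' = inv (R z) x"
    have Rv': "R z v' = x" unfolding v'_def by (rule surj_f_inv_f[OF bij_is_surj[OF Rb]])
    have cx: "char_fun S z x = scaleC z (P v')" unfolding v'_def by (rule char_fun_on[OF UxK])
    have "U x = U v' - scaleC z (v' - P v')" using U_R[where z=z and y=v'] Rv' by simp
    then have "U v' - scaleC z v' = k" using x(2) unfolding cx
      by (simp add: scaleC_diff_right algebra_simps)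
    then have "v' = v" using v inj_shift unfolding inj_def by metis
    then show "x = R z v" using Rv' by simp
  qed
  show "inv_into (hs_adj U ` K) (\<lambda>x. U x - char_fun S z x) k = R z v"
    unfolding inv_into_def
  proof (rule some_equality)
    show "R z v \<in> hs_adj U ` K \<and> U (R z v) - char_fun S z (R z v) = k" using wA Uw chw by simp
  qed (use uniq in blast)
qed

lemma herglotz_compression:
  assumes z: "cmod z < 1" and k1: "k1 \<in> K" and k2: "k2 \<in> K"
  shows "(let w = inv_into (hs_adj U ` K) (\<lambda>x. U x - char_fun S z x) k1
          in cinner (U w + char_fun S z w) k2)
       = cinner (U (inv (\<lambda>x. U x - scaleC z x) k1) + scaleC z (inv (\<lambda>x. U x - scaleC z x) k1)) k2"
proof -
  define v where "v = inv (\<lambda>x. U x - scaleC z x) k1"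
  have v: "U v - scaleC z v = k1"
    unfolding v_def by (rule surj_f_inv_f[OF bij_is_surj[OF shifted_bij[OF z]]])
  have "cinner (P v) k2 = cinner v k2" using Porth[OF k2, of v] by (simp add: cinner_diff_left)
  then have "cinner (k1 + scaleC z (P v) + scaleC z (P v)) k2 = cinner (k1 + scaleC z v + scaleC z v) k2"
    by (simp add: cinner_add_left cinner_scaleC_left)
  also have "k1 + scaleC z v + scaleC z v = U v + scaleC z v" using v by (simp add: algebra_simps)
  finally show ?thesis
    unfolding Let_def v_def[symmetric] char_fun_solution[OF z k1 v] .
qed

end

section \<open>Finite measures on the circle with equal Herglotz transforms coincide\<close>

lemma borel_circle_eq: "borel_circle = sets (restrict_space borel unit_circle)"
proof -
  have c: "unit_circle \<inter> space borel \<in> sets borel" by simp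
  show ?thesis unfolding borel_circle_def using sets_restrict_space_iff[OF c] by auto
qed

lemma borel_circle_sigma_algebra: "sigma_algebra unit_circle borel_circle"
  using sets.sigma_algebra_axioms[of "restrict_space borel unit_circle"]
  by (simp add: borel_circle_eq space_restrict_space)

locale circle_measure = finite_measure M for M :: "complex measure" +
  assumes space_circle: "space M = unit_circle" and sets_circle: "sets M = borel_circle"
begin

lemma measurable_continuous:
  fixes f :: "complex \<Rightarrow> 'b::topological_space"
  assumes "continuous_on unit_circle f"
  shows "f \<in> borel_measurable M"
proof -
  have "f \<in> borel_measurable (restrict_space borel unit_circle)"
    by (rule borel_measurable_continuous_on_restrict) fact
  moreover have "measurable M (borel::'b measure) = measurable (restrict_space borel unit_circle) borel"
    by (rule measurable_cong_sets) (simp_all add: sets_circle borel_circle_eq)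
  ultimately show ?thesis by simp
qed

lemma integrable_continuous:
  fixes f :: "complex \<Rightarrow> 'b::{banach,second_countable_topology}"
  assumes f: "continuous_on unit_circle f"
  shows "integrable M f"
proof -
  have "compact (f ` unit_circle)" by (rule compact_continuous_image[OF f]) simp
  then have "bounded (f ` unit_circle)" by (rule compact_imp_bounded)
  then obtain B where "\<forall>y\<in>f ` unit_circle. norm y \<le> B" by (auto simp: bounded_iff)
  then have "AE x in M. norm (f x) \<le> B" using space_circle by (intro AE_I2) auto
  then show ?thesis by (rule integrable_const_bound) (rule measurable_continuous[OF f])
qed

lemma integral_norm_le:
  fixes f :: "complex \<Rightarrow> 'b::{banach,second_countable_topology}"
  assumes f: "continuous_on unit_circle f" and bound: "\<And>x. x \<in> unit_circle \<Longrightarrow> norm (f x) \<le> B"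
  shows "norm (integral\<^sup>L M f) \<le> B * measure M unit_circle"
proof -
  have "norm (integral\<^sup>L M f) \<le> integral\<^sup>L M (\<lambda>x. norm (f x))" by (rule integral_norm_bound)
  also have "\<dots> \<le> integral\<^sup>L M (\<lambda>x. B)"
    by (rule integral_mono) (use integrable_continuous[OF f] bound space_circle in auto)
  finally show ?thesis by (simp add: space_circle mult.commute)
qed

end

text \<open>Herglotz and Cauchy kernels: on the circle \<open>(\<xi>+z)/(\<xi>-z) = 2/(1 - z cnj \<xi>) - 1\<close>, and the
  Cauchy kernel \<open>1/(1 - z cnj \<xi>)\<close> is the generating function of the powers \<open>cnj \<xi>\<^sup>n\<close>.\<close>
definition cauchy_kernel :: "complex \<Rightarrow> complex \<Rightarrow> complex" where
  "cauchy_kernel z = (\<lambda>\<xi>. 1 / (1 - z * cnj \<xi>))"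

lemma cauchy_denom_nonzero: "cmod z < 1 \<Longrightarrow> \<xi> \<in> unit_circle \<Longrightarrow> 1 - z * cnj \<xi> \<noteq> 0"
proof
  assume z: "cmod z < 1" and xi: "\<xi> \<in> unit_circle" and "1 - z * cnj \<xi> = 0"
  then have "cmod (z * cnj \<xi>) = 1" by simp
  then show False using z xi by (simp add: norm_mult)
qed

lemma continuous_cauchy_kernel: "cmod z < 1 \<Longrightarrow> continuous_on unit_circle (cauchy_kernel z)"
  unfolding cauchy_kernel_def by (intro continuous_intros) (auto dest: cauchy_denom_nonzero)

lemma continuous_herglotz_kernel: "cmod z < 1 \<Longrightarrow> continuous_on unit_circle (\<lambda>\<xi>. (\<xi> + z) / (\<xi> - z))"
  by (intro continuous_intros) auto

lemma herglotz_cauchy: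
  assumes "cmod z < 1" "\<xi> \<in> unit_circle"
  shows "(\<xi> + z) / (\<xi> - z) = 2 * cauchy_kernel z \<xi> - 1"
proof -
  define D where "D = 1 - z * cnj \<xi>"
  have d: "D \<noteq> 0" unfolding D_def by (rule cauchy_denom_nonzero[OF assms])
  have n: "\<xi> * cnj \<xi> = 1" using assms(2) by (simp add: complex_norm_square[symmetric])
  have x0: "\<xi> \<noteq> 0" using assms(2) by auto
  have e1: "\<xi> - z = \<xi> * D" and e2: "\<xi> + z = \<xi> * (2 - D)"
    unfolding D_def using n by (simp_all add: algebra_simps)
  have "(\<xi> + z) / (\<xi> - z) = (2 - D) / D" unfolding e1 e2 using x0 by simp
  also have "\<dots> = 2 / D - 1" using d by (simp add: diff_divide_distrib)
  finally show ?thesis unfolding cauchy_kernel_def D_def by simp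
qed

lemma cauchy_kernel_expand:
  assumes z: "cmod z < 1" and xi: "\<xi> \<in> unit_circle"
  shows "cauchy_kernel z \<xi> = (\<Sum>j<n. z^j * cnj \<xi> ^ j) + z^n * (cnj \<xi> ^ n * cauchy_kernel z \<xi>)"
proof -
  define a where "a = z * cnj \<xi>"
  have d: "1 - a \<noteq> 0" unfolding a_def by (rule cauchy_denom_nonzero[OF z xi])
  have "(\<Sum>j<n. z^j * cnj \<xi> ^ j) = (\<Sum>j<n. a^j)" unfolding a_def by (simp add: power_mult_distrib)
  also have "\<dots> = (1 - a^n) / (1 - a)" using d by (simp add: sum_gp_strict)
  finally have "(\<Sum>j<n. z^j * cnj \<xi> ^ j) = (1 - a^n) / (1 - a)" .
  moreover have "z^n * (cnj \<xi> ^ n * cauchy_kernel z \<xi>) = a^n / (1 - a)"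
    unfolding cauchy_kernel_def a_def by (simp add: power_mult_distrib)
  ultimately show ?thesis
    using d unfolding cauchy_kernel_def a_def[symmetric] by (simp add: diff_divide_distrib add_divide_distrib[symmetric])
qed

lemma cauchy_kernel_near_one:
  assumes t: "0 < t" "t < 1" and xi: "\<xi> \<in> unit_circle"
  shows "norm (cnj \<xi> ^ n * cauchy_kernel (of_real t) \<xi> - cnj \<xi> ^ n) \<le> t / (1 - t)"
proof -
  define a where "a = of_real t * cnj \<xi>"
  have d: "1 - a \<noteq> 0" unfolding a_def by (rule cauchy_denom_nonzero) (use t xi in auto)
  have na: "cmod a = t" unfolding a_def using xi t by (simp add: norm_mult)
  have n1: "1 - t \<le> cmod (1 - a)" using norm_triangle_ineq2[of 1 a] na by simp
  have "cnj \<xi> ^ n * cauchy_kernel (of_real t) \<xi> - cnj \<xi> ^ n = cnj \<xi> ^ n * (a / (1 - a))"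
    unfolding cauchy_kernel_def a_def[symmetric] using d by (simp add: field_simps)
  then have "norm (cnj \<xi> ^ n * cauchy_kernel (of_real t) \<xi> - cnj \<xi> ^ n) = t / cmod (1 - a)"
    using xi na by (simp add: norm_mult norm_power norm_divide)
  also have "\<dots> \<le> t / (1 - t)" using n1 t by (intro divide_left_mono mult_pos_pos) auto
  finally show ?thesis .
qed

lemma nonpos_if_small_multiples:
  fixes x C :: real
  assumes h: "\<And>t. 0 < t \<Longrightarrow> t < 1 \<Longrightarrow> x \<le> t / (1 - t) * C" and C: "0 \<le> C"
  shows "x \<le> 0"
proof (rule ccontr)
  assume "\<not> x \<le> 0"
  then have x: "0 < x" by simp
  define t where "t = x / (2 * (C + x))"
  have t0: "0 < t" and th: "t \<le> 1/2" unfolding t_def using x C by (simp_all add: field_simps)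
  have "t / (1 - t) * C \<le> 2 * t * C" using t0 th C by (intro mult_right_mono) (simp_all add: field_simps)
  also have "2 * t * C = x * C / (C + x)" unfolding t_def using x C by (simp add: field_simps)
  also have "\<dots> < x" using x C by (simp add: field_simps)
  finally show False using h[OF t0] th by simp
qed

text \<open>Trigonometric polynomials, represented as lists of terms \<open>(c, a, b)\<close> meaning \<open>c x\<^sup>a (cnj x)\<^sup>b\<close>.\<close>
fun trig_poly :: "(complex \<times> nat \<times> nat) list \<Rightarrow> complex \<Rightarrow> complex" where
  "trig_poly [] x = 0"
| "trig_poly ((c, a, b) # ts) x = c * x ^ a * cnj x ^ b + trig_poly ts x"

definition trig_poly_mult ::
  "(complex \<times> nat \<times> nat) list \<Rightarrow> (complex \<times> nat \<times> nat) list \<Rightarrow> (complex \<times> nat \<times> nat) list" where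
  "trig_poly_mult ts us = concat (map (\<lambda>(c, a, b). map (\<lambda>(d, a', b'). (c * d, a + a', b + b')) us) ts)"

lemma trig_poly_append: "trig_poly (xs @ ys) x = trig_poly xs x + trig_poly ys x"
  by (induction xs x rule: trig_poly.induct) auto

lemma trig_poly_mult: "trig_poly (trig_poly_mult ts us) x = trig_poly ts x * trig_poly us x"
proof -
  have term_mult: "trig_poly (map (\<lambda>(d, a', b'). (c * d, a + a', b + b')) us) x
      = c * x ^ a * cnj x ^ b * trig_poly us x" for c a b x
    by (induction us x rule: trig_poly.induct) (auto simp: algebra_simps power_add)
  show ?thesis unfolding trig_poly_mult_def
    by (induction ts x rule: trig_poly.induct) (auto simp: trig_poly_append term_mult algebra_simps)
qed

lemma continuous_trig_poly: "continuous_on A (trig_poly ts)"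
proof (induction ts)
  case Nil
  have "trig_poly [] = (\<lambda>x. 0)" by (rule ext) simp
  then show ?case by (simp add: continuous_on_const)
next
  case (Cons t ts)
  obtain c a b where t: "t = (c, a, b)" by (rule prod_cases3)
  have "trig_poly (t # ts) = (\<lambda>x. c * x ^ a * cnj x ^ b + trig_poly ts x)" by (rule ext) (simp add: t)
  then show ?case using Cons by (simp only:) (intro continuous_intros)
qed

text \<open>Real parts of trigonometric polynomials form a point-separating algebra on the circle,
  to which Stone-Weierstrass applies.\<close>
definition real_trig_polys :: "(complex \<Rightarrow> real) set" where
  "real_trig_polys = {g. \<exists>ts. \<forall>x. complex_of_real (g x) = trig_poly ts x}"

lemma real_trig_polys_ring: "function_ring_on real_trig_polys unit_circle"
proof
  show "compact unit_circle" by simp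
next
  fix f assume "f \<in> real_trig_polys"
  then obtain ts where ts: "\<And>x. complex_of_real (f x) = trig_poly ts x" unfolding real_trig_polys_def by blast
  have "f = (\<lambda>x. Re (trig_poly ts x))" by (rule ext) (metis Re_complex_of_real ts)
  then show "continuous_on unit_circle f" by (simp only:) (intro continuous_intros continuous_trig_poly)
next
  fix f g assume "f \<in> real_trig_polys" "g \<in> real_trig_polys"
  then obtain ts us where ts: "\<And>x. complex_of_real (f x) = trig_poly ts x"
    and us: "\<And>x. complex_of_real (g x) = trig_poly us x" unfolding real_trig_polys_def by blast
  show "(\<lambda>x. f x + g x) \<in> real_trig_polys" unfolding real_trig_polys_def
    by (intro CollectI exI[of _ "ts @ us"]) (simp add: trig_poly_append flip: ts us)
  show "(\<lambda>x. f x * g x) \<in> real_trig_polys" unfolding real_trig_polys_def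
    by (intro CollectI exI[of _ "trig_poly_mult ts us"]) (simp add: trig_poly_mult flip: ts us)
next
  fix c :: real
  show "(\<lambda>_. c) \<in> real_trig_polys" unfolding real_trig_polys_def
    by (intro CollectI exI[of _ "[(complex_of_real c, 0, 0)]"]) simp
next
  fix x y :: complex assume "x \<noteq> y"
  have "Re \<in> real_trig_polys" unfolding real_trig_polys_def
    by (intro CollectI exI[of _ "[(1/2, 1, 0), (1/2, 0, 1)]"] allI) (simp add: complex_eq_iff)
  moreover have "Im \<in> real_trig_polys" unfolding real_trig_polys_def
    by (intro CollectI exI[of _ "[(- \<i>/2, 1, 0), (\<i>/2, 0, 1)]"] allI) (simp add: complex_eq_iff)
  moreover have "Re x \<noteq> Re y \<or> Im x \<noteq> Im y" using \<open>x \<noteq> y\<close> complex_eqI by blast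
  ultimately show "\<exists>f\<in>real_trig_polys. f x \<noteq> f y" by blast
qed

text \<open>On the circle \<open>cnj x = x\<^sup>-\<^sup>1\<close>, so every monomial \<open>x\<^sup>a (cnj x)\<^sup>b\<close> is a power of \<open>cnj x\<close>
  or the conjugate of one.\<close>
lemma monomial_on_circle:
  assumes x: "x \<in> unit_circle"
  shows "x ^ a * cnj x ^ b = (if a \<le> b then cnj x ^ (b - a) else cnj (cnj x ^ (a - b)))"
proof -
  have "x * cnj x = 1" using x by (simp add: complex_norm_square[symmetric])
  then have unit: "x ^ m * cnj x ^ m = 1" for m by (metis power_mult_distrib power_one)
  show ?thesis
  proof (cases "a \<le> b")
    case True
    then have "cnj x ^ b = cnj x ^ a * cnj x ^ (b - a)" by (simp add: power_add[symmetric])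
    then show ?thesis using True unit[of a] by (simp add: mult.assoc[symmetric])
  next
    case False
    then have "x ^ a = x ^ b * x ^ (a - b)" by (simp add: power_add[symmetric])
    then show ?thesis using False unit[of b] by (simp add: algebra_simps)
  qed
qed

lemma cutoff_tendsto_indicator:
  fixes C :: "'a::metric_space set"
  assumes C: "closed C" "C \<noteq> {}"
  shows "(\<lambda>n. max 0 (1 - real n * infdist x C)) \<longlonglongrightarrow> (indicator C x :: real)"
proof (cases "x \<in> C")
  case True
  then have "infdist x C = 0" using in_closed_iff_infdist_zero[OF C] by blast
  then show ?thesis using True by simp
next
  case xC: False
  have d: "0 < infdist x C" by (rule infdist_pos_not_in_closed[OF C xC])
  obtain N :: nat where N: "1 / infdist x C < real N" using reals_Archimedean2 by blast
  have "max 0 (1 - real n * infdist x C) = 0" if "N \<le> n" for n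
  proof -
    have "1 / infdist x C < real n" using N that by linarith
    then show ?thesis using d by (simp add: divide_less_eq)
  qed
  then have "eventually (\<lambda>n. max 0 (1 - real n * infdist x C) = indicator C x) sequentially"
    using xC by (auto simp: eventually_sequentially)
  then show ?thesis by (rule tendsto_eventually)
qed

definition moment :: "complex measure \<Rightarrow> nat \<Rightarrow> complex" where
  "moment L n = (\<integral>\<xi>. cnj \<xi> ^ n \<partial>L)"

lemma (in circle_measure) cauchy_transform_expand:
  assumes z: "cmod z < 1"
  shows "integral\<^sup>L M (cauchy_kernel z)
    = (\<Sum>j<n. z^j * moment M j) + z^n * (\<integral>\<xi>. cnj \<xi> ^ n * cauchy_kernel z \<xi> \<partial>M)"
proof -
  have "integral\<^sup>L M (cauchy_kernel z)
      = (\<integral>\<xi>. (\<Sum>j<n. z^j * cnj \<xi> ^ j) + z^n * (cnj \<xi> ^ n * cauchy_kernel z \<xi>) \<partial>M)"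
    by (rule Bochner_Integration.integral_cong) (use cauchy_kernel_expand[OF z] space_circle in auto)
  also have "\<dots> = (\<Sum>j<n. z^j * moment M j) + z^n * (\<integral>\<xi>. cnj \<xi> ^ n * cauchy_kernel z \<xi> \<partial>M)"
    using integrable_continuous[of "\<lambda>\<xi>. cnj \<xi> ^ n * cauchy_kernel z \<xi>"]
      integrable_continuous[of "\<lambda>\<xi>. z^j * cnj \<xi> ^ j" for j] continuous_cauchy_kernel[OF z]
    by (simp add: Bochner_Integration.integral_sum moment_def continuous_intros)
  finally show ?thesis .
qed

lemma (in circle_measure) moment_approx:
  assumes t: "0 < t" "t < 1"
  shows "norm ((\<integral>\<xi>. cnj \<xi> ^ n * cauchy_kernel (of_real t) \<xi> \<partial>M) - moment M n)
           \<le> t / (1 - t) * measure M unit_circle"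
proof -
  have z: "cmod (of_real t) < 1" using t by simp
  have c: "continuous_on unit_circle (\<lambda>\<xi>. cnj \<xi> ^ n * cauchy_kernel (of_real t) \<xi>)"
    by (intro continuous_intros continuous_cauchy_kernel[OF z])
  have "(\<integral>\<xi>. cnj \<xi> ^ n * cauchy_kernel (of_real t) \<xi> \<partial>M) - moment M n
      = (\<integral>\<xi>. cnj \<xi> ^ n * cauchy_kernel (of_real t) \<xi> - cnj \<xi> ^ n \<partial>M)"
    unfolding moment_def
    using integrable_continuous[OF c] integrable_continuous[of "\<lambda>\<xi>. cnj \<xi> ^ n"] by (simp add: continuous_intros)
  also have "norm \<dots> \<le> t / (1 - t) * measure M unit_circle"
    by (rule integral_norm_le) (use cauchy_kernel_near_one[OF t] in \<open>auto intro!: continuous_intros c\<close>)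
  finally show ?thesis .
qed

locale herglotz_pair = M: circle_measure M + N: circle_measure N for M N :: "complex measure" +
  assumes herglotz_eq: "\<And>z. cmod z < 1 \<Longrightarrow> (\<integral>\<xi>. (\<xi> + z) / (\<xi> - z) \<partial>M) = (\<integral>\<xi>. (\<xi> + z) / (\<xi> - z) \<partial>N)"
begin

lemma total_mass_eq: "measure M unit_circle = measure N unit_circle"
proof -
  have "(\<integral>\<xi>. (\<xi> + 0) / (\<xi> - 0) \<partial>L) = (\<integral>\<xi>. 1 \<partial>L)" if "space L = unit_circle" for L
    by (rule Bochner_Integration.integral_cong) (use that in auto)
  then have "(\<integral>\<xi>. (1::complex) \<partial>M) = (\<integral>\<xi>. 1 \<partial>N)"
    using herglotz_eq[of 0] M.space_circle N.space_circle by simp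
  then show ?thesis by (simp add: M.space_circle N.space_circle)
qed

lemma cauchy_transform_eq: "cmod z < 1 \<Longrightarrow> integral\<^sup>L M (cauchy_kernel z) = integral\<^sup>L N (cauchy_kernel z)"
proof -
  assume z: "cmod z < 1"
  have herg: "(\<integral>\<xi>. (\<xi> + z) / (\<xi> - z) \<partial>L) = 2 * integral\<^sup>L L (cauchy_kernel z) - measure L unit_circle"
    if "circle_measure L" for L
  proof -
    interpret L: circle_measure L by fact
    have "(\<integral>\<xi>. (\<xi> + z) / (\<xi> - z) \<partial>L) = (\<integral>\<xi>. 2 * cauchy_kernel z \<xi> - 1 \<partial>L)"
      by (rule Bochner_Integration.integral_cong) (use L.space_circle herglotz_cauchy[OF z] in auto)
    also have "\<dots> = 2 * integral\<^sup>L L (cauchy_kernel z) - measure L unit_circle"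
      using L.integrable_continuous[OF continuous_cauchy_kernel[OF z]]
      by (simp add: L.space_circle scaleR_conv_of_real)
    finally show ?thesis .
  qed
  show ?thesis
    using herglotz_eq[OF z] herg[OF M.circle_measure_axioms] herg[OF N.circle_measure_axioms] total_mass_eq
    by simp
qed

text \<open>All moments agree, by induction: comparing the Cauchy transforms at \<open>z = t\<close> leaves
  \<open>t\<^sup>n\<close> times the \<open>n\<close>-th remainder, which tends to the \<open>n\<close>-th moment as \<open>t \<rightarrow> 0\<close>.\<close>
lemma moment_eq: "moment M n = moment N n"
proof (induction n rule: less_induct)
  case (less n)
  define C where "C = measure M unit_circle + measure N unit_circle"
  have C0: "0 \<le> C" unfolding C_def by simp
  have "norm (moment M n - moment N n) \<le> t / (1 - t) * C" if t: "0 < t" "t < 1" for t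
  proof -
    define z where "z = complex_of_real t"
    have z: "cmod z < 1" and z0: "z \<noteq> 0" unfolding z_def using t by simp_all
    define gM where "gM = (\<integral>\<xi>. cnj \<xi> ^ n * cauchy_kernel z \<xi> \<partial>M)"
    define gN where "gN = (\<integral>\<xi>. cnj \<xi> ^ n * cauchy_kernel z \<xi> \<partial>N)"
    have "(\<Sum>j<n. z^j * moment M j) + z^n * gM = (\<Sum>j<n. z^j * moment N j) + z^n * gN"
      using cauchy_transform_eq[OF z] unfolding gM_def gN_def
        M.cauchy_transform_expand[OF z, where n=n] N.cauchy_transform_expand[OF z, where n=n] .
    moreover have "(\<Sum>j<n. z^j * moment M j) = (\<Sum>j<n. z^j * moment N j)" using less by simp
    ultimately have g: "gM = gN" using z0 by simp
    have "norm (moment M n - moment N n) \<le> norm (gN - moment N n) + norm (gM - moment M n)"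
      using g norm_triangle_ineq4[of "gN - moment N n" "gM - moment M n"] by simp
    also have "\<dots> \<le> t / (1 - t) * C"
      using M.moment_approx[OF t, of n] N.moment_approx[OF t, of n]
      unfolding gM_def gN_def z_def C_def by (simp add: algebra_simps)
    finally show ?thesis .
  qed
  then have "norm (moment M n - moment N n) \<le> 0"
    using nonpos_if_small_multiples C0 by blast
  then show ?case by simp
qed

lemma monomial_integral_eq: "(\<integral>x. x ^ a * cnj x ^ b \<partial>M) = (\<integral>x. x ^ a * cnj x ^ b \<partial>N)"
proof (cases "a \<le> b")
  case True
  have "(\<integral>x. x ^ a * cnj x ^ b \<partial>L) = moment L (b - a)" if "circle_measure L" for L
  proof -
    interpret L: circle_measure L by fact
    show ?thesis unfolding moment_def
      by (rule Bochner_Integration.integral_cong) (use True monomial_on_circle L.space_circle in auto)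
  qed
  then show ?thesis using M.circle_measure_axioms N.circle_measure_axioms moment_eq by simp
next
  case False
  have "(\<integral>x. x ^ a * cnj x ^ b \<partial>L) = cnj (moment L (a - b))" if "circle_measure L" for L
  proof -
    interpret L: circle_measure L by fact
    have "(\<integral>x. x ^ a * cnj x ^ b \<partial>L) = (\<integral>x. cnj (cnj x ^ (a - b)) \<partial>L)"
      by (rule Bochner_Integration.integral_cong) (use False monomial_on_circle L.space_circle in auto)
    then show ?thesis unfolding moment_def by (simp only: Bochner_Integration.integral_cnj)
  qed
  then show ?thesis using M.circle_measure_axioms N.circle_measure_axioms moment_eq by simp
qed

lemma trig_poly_integral_eq: "integral\<^sup>L M (trig_poly ts) = integral\<^sup>L N (trig_poly ts)"
proof (induction ts)
  case Nil
  have "trig_poly [] = (\<lambda>x. 0)" by (rule ext) simp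
  then show ?case by simp
next
  case (Cons t ts)
  obtain c a b where t: "t = (c, a, b)" by (rule prod_cases3)
  have eq: "trig_poly (t # ts) = (\<lambda>x. c * (x ^ a * cnj x ^ b) + trig_poly ts x)"
    by (rule ext) (simp add: t mult.assoc)
  have c: "continuous_on unit_circle (\<lambda>x. x ^ a * cnj x ^ b)" by (intro continuous_intros)
  show ?case unfolding eq
    using M.integrable_continuous[OF c] N.integrable_continuous[OF c] Cons monomial_integral_eq
      M.integrable_continuous[OF continuous_trig_poly] N.integrable_continuous[OF continuous_trig_poly]
    by simp
qed

text \<open>By Stone-Weierstrass, the integrals of all continuous real functions agree.\<close>
lemma continuous_integral_eq:
  fixes f :: "complex \<Rightarrow> real"
  assumes f: "continuous_on unit_circle f"
  shows "integral\<^sup>L M f = integral\<^sup>L N f"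
proof -
  interpret R: function_ring_on real_trig_polys unit_circle by (rule real_trig_polys_ring)
  define C where "C = measure M unit_circle + measure N unit_circle"
  have C0: "0 \<le> C" unfolding C_def by simp
  have "\<bar>integral\<^sup>L M f - integral\<^sup>L N f\<bar> \<le> 0 + e" if e: "0 < e" for e
  proof -
    define e' where "e' = e / (C + 1)"
    have e': "0 < e'" unfolding e'_def using e C0 by simp
    obtain g where gR: "g \<in> real_trig_polys" and fg: "\<And>x. x \<in> unit_circle \<Longrightarrow> \<bar>f x - g x\<bar> < e'"
      using R.Stone_Weierstrass_basic[OF f e'] by blast
    obtain ts where ts: "\<And>x. complex_of_real (g x) = trig_poly ts x"
      using gR unfolding real_trig_polys_def by blast
    have gc: "continuous_on unit_circle g" by (rule R.continuous[OF gR])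
    have "complex_of_real (integral\<^sup>L M g) = complex_of_real (integral\<^sup>L N g)"
      unfolding integral_complex_of_real[symmetric] ts by (rule trig_poly_integral_eq)
    then have gg: "integral\<^sup>L M g = integral\<^sup>L N g" by simp
    have dc: "continuous_on unit_circle (\<lambda>x. f x - g x)" by (intro continuous_intros f gc)
    have "integral\<^sup>L M f - integral\<^sup>L N f = integral\<^sup>L M (\<lambda>x. f x - g x) - integral\<^sup>L N (\<lambda>x. f x - g x)"
      using M.integrable_continuous[OF f] N.integrable_continuous[OF f]
        M.integrable_continuous[OF gc] N.integrable_continuous[OF gc] gg by simp
    also have "\<bar>\<dots>\<bar> \<le> e' * C"
      using M.integral_norm_le[OF dc, of e'] N.integral_norm_le[OF dc, of e'] fg
      unfolding C_def by (fastforce simp: algebra_simps intro: less_imp_le)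
    also have "\<dots> \<le> e" unfolding e'_def using e C0 by (simp add: field_simps)
    finally show ?thesis by simp
  qed
  then show ?thesis using field_le_epsilon[of "\<bar>integral\<^sup>L M f - integral\<^sup>L N f\<bar>" 0] by simp
qed

text \<open>Closed sets have equal measure, by dominated convergence applied to the cut-off
  functions approximating their indicators.\<close>
lemma closed_measure_eq:
  assumes C: "closed C" "C \<subseteq> unit_circle"
  shows "measure M C = measure N C"
proof (cases "C = {}")
  case True then show ?thesis by simp
next
  case False
  define s where "s = (\<lambda>(n::nat) x. max 0 (1 - real n * infdist x C))"
  have Cb: "C \<in> borel_circle" unfolding borel_circle_def using C by auto
  have sc: "continuous_on unit_circle (s n)" for n unfolding s_def by (intro continuous_intros)
  have lim: "(\<lambda>n. s n x) \<longlonglongrightarrow> indicator C x" for x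
    unfolding s_def by (rule cutoff_tendsto_indicator[OF C(1) False])
  have conv: "(\<lambda>n. integral\<^sup>L L (s n)) \<longlonglongrightarrow> measure L C" if "circle_measure L" for L
  proof -
    interpret L: circle_measure L by fact
    have "(\<lambda>n. integral\<^sup>L L (s n)) \<longlonglongrightarrow> integral\<^sup>L L (indicator C :: complex \<Rightarrow> real)"
    proof (rule integral_dominated_convergence[where w="\<lambda>_. 1"])
      show "indicator C \<in> borel_measurable L" using Cb L.sets_circle by (intro borel_measurable_indicator) simp
      show "\<And>n. s n \<in> borel_measurable L" by (rule L.measurable_continuous[OF sc])
      show "\<And>n. AE x in L. norm (s n x) \<le> 1" unfolding s_def by (simp add: infdist_nonneg)
    qed (use lim in auto)
    also have "integral\<^sup>L L (indicator C :: complex \<Rightarrow> real) = measure L C"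
      using C L.space_circle by (simp add: Int_absorb2)
    finally show ?thesis .
  qed
  have "(\<lambda>n. integral\<^sup>L M (s n)) \<longlonglongrightarrow> measure N C"
    using conv[OF N.circle_measure_axioms] continuous_integral_eq[OF sc] by simp
  then show ?thesis using conv[OF M.circle_measure_axioms] LIMSEQ_unique by blast
qed

text \<open>Closed sets form an intersection-stable generator of the Borel sets.\<close>
theorem emeasure_eq:
  assumes D: "D \<in> borel_circle"
  shows "emeasure M D = emeasure N D"
proof -
  have extend: "emeasure (distr L borel (\<lambda>x. x)) A = emeasure L (A \<inter> unit_circle)"
    if "circle_measure L" "A \<in> sets borel" for L A
  proof -
    interpret L: circle_measure L by fact
    have "(\<lambda>x. x) \<in> measurable L borel" by (rule L.measurable_continuous) (intro continuous_intros)
    from emeasure_distr[OF this that(2)] show ?thesis using L.space_circle by (simp add: Int_commute)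
  qed
  note eM = extend[OF M.circle_measure_axioms] and eN = extend[OF N.circle_measure_axioms]
  have "distr M borel (\<lambda>x. x) = distr N borel (\<lambda>x. x)"
  proof (rule measure_eqI_generator_eq[where E="Collect closed" and \<Omega>=UNIV and A="\<lambda>_. UNIV"])
    fix X :: "complex set" assume "X \<in> Collect closed"
    then have X: "closed X" by simp
    have c: "closed (X \<inter> unit_circle)" using X by (intro closed_Int) auto
    have b: "X \<inter> unit_circle \<in> borel_circle" unfolding borel_circle_def using c by auto
    have "emeasure M (X \<inter> unit_circle) = emeasure N (X \<inter> unit_circle)"
      using closed_measure_eq[OF c] b M.sets_circle N.sets_circle
      by (simp add: M.emeasure_eq_measure N.emeasure_eq_measure)
    then show "emeasure (distr M borel (\<lambda>x. x)) X = emeasure (distr N borel (\<lambda>x. x)) X"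
      using eM eN X by simp
  next
    show "emeasure (distr M borel (\<lambda>x. x)) UNIV \<noteq> \<infinity>" using eM[of UNIV] M.emeasure_finite by simp
  qed (auto simp: Int_stable_def borel_eq_closed)
  moreover have "D \<in> sets borel" "D \<inter> unit_circle = D" using D unfolding borel_circle_def by auto
  ultimately show ?thesis using eM eN by metis
qed

end

section \<open>Scalar measures of a generalized spectral measure\<close>

context
  fixes K :: "'a::chilbert set" and G :: "complex set \<Rightarrow> 'a \<Rightarrow> 'a" and k :: 'a
  assumes G: "gen_spectral_measure K G" and k: "k \<in> K"
begin

lemma spectral_form_nonneg: "D \<in> borel_circle \<Longrightarrow> 0 \<le> Re (cinner (G D k) k)"
  using G k unfolding gen_spectral_measure_def by blast

text \<open>Strong countable additivity of \<open>G\<close> makes \<open>\<Delta> \<mapsto> \<langle>G(\<Delta>)k, k\<rangle>\<close> countably additive.\<close>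
lemma spectral_form_countably_additive:
  "countably_additive borel_circle (\<lambda>D. ennreal (Re (cinner (G D k) k)))"
  unfolding countably_additive_def
proof (intro allI impI)
  fix A :: "nat \<Rightarrow> complex set"
  assume A: "range A \<subseteq> borel_circle" "disjoint_family A" "\<Union> (range A) \<in> borel_circle"
  have lim: "(\<lambda>n. \<Sum>i<n. G (A i) k) \<longlonglongrightarrow> G (\<Union> (range A)) k"
    using G k A unfolding gen_spectral_measure_def by blast
  have "(\<lambda>n. Re (cinner (\<Sum>i<n. G (A i) k) k)) \<longlonglongrightarrow> Re (cinner (G (\<Union> (range A)) k) k)"
    by (rule continuous_on_tendsto_compose[OF continuous_re_cinner lim]) auto
  then have "(\<lambda>i. Re (cinner (G (A i) k) k)) sums Re (cinner (G (\<Union> (range A)) k) k)"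
    unfolding sums_def re_cinner_sum .
  moreover have "\<And>i. 0 \<le> Re (cinner (G (A i) k) k)" using A(1) spectral_form_nonneg by blast
  ultimately show "(\<Sum>i. ennreal (Re (cinner (G (A i) k) k))) = ennreal (Re (cinner (G (\<Union> (range A)) k) k))"
    by (simp add: suminf_ennreal2 sums_summable sums_unique[symmetric])
qed

lemma opm_emeasure:
  "D \<in> borel_circle \<Longrightarrow> emeasure (opm_scalar G k) D = ennreal (Re (cinner (G D k) k))"
  unfolding opm_scalar_def
  using emeasure_measure_of_sigma[OF borel_circle_sigma_algebra _ spectral_form_countably_additive]
    G k by (simp add: positive_def gen_spectral_measure_def)

lemma opm_circle_measure: "circle_measure (opm_scalar G k)"
proof -
  have sp: "space (opm_scalar G k) = unit_circle"
    unfolding opm_scalar_def by (rule space_measure_of) (auto simp: borel_circle_def)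
  have "sets (opm_scalar G k) = sigma_sets unit_circle borel_circle"
    unfolding opm_scalar_def by (rule sets_measure_of) (auto simp: borel_circle_def)
  then have st: "sets (opm_scalar G k) = borel_circle"
    by (simp add: sigma_algebra.sigma_sets_eq[OF borel_circle_sigma_algebra])
  have "unit_circle \<in> borel_circle" unfolding borel_circle_def by auto
  then have "finite_measure (opm_scalar G k)" by (intro finite_measureI) (simp add: sp opm_emeasure)
  then show ?thesis using sp st by (simp add: circle_measure_def circle_measure_axioms_def)
qed

end

lemma opm_scalar_scaleC:
  assumes G: "gen_spectral_measure K G" and K: "hs_closed_subspace K" and k: "k \<in> K"
    and f: "continuous_on unit_circle f"
  shows "integral\<^sup>L (opm_scalar G (scaleC c k)) f
       = complex_of_real ((cmod c)^2) * integral\<^sup>L (opm_scalar G k) (f :: complex \<Rightarrow> complex)"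
proof -
  define r where "r = (cmod c)^2"
  have ck: "scaleC c k \<in> K" using K k unfolding hs_closed_subspace_def by blast
  interpret Mk: circle_measure "opm_scalar G k" by (rule opm_circle_measure[OF G k])
  interpret Mck: circle_measure "opm_scalar G (scaleC c k)" by (rule opm_circle_measure[OF G ck])
  have eq: "opm_scalar G (scaleC c k) = density (opm_scalar G k) (\<lambda>_. ennreal r)"
  proof (rule measure_eqI)
    fix A assume "A \<in> sets (opm_scalar G (scaleC c k))"
    then have A: "A \<in> borel_circle" using Mck.sets_circle by simp
    have "G A (scaleC c k) = scaleC c (G A k)" using G A k unfolding gen_spectral_measure_def by blast
    then have "cinner (G A (scaleC c k)) (scaleC c k) = complex_of_real r * cinner (G A k) k"
      unfolding r_def
      by (simp only: cinner_scaleC_left cinner_scaleC_right mult.assoc[symmetric]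
          mult.commute[of "cnj c" c] complex_mult_cnj cmod_power2)
    moreover have "emeasure (density (opm_scalar G k) (\<lambda>_. ennreal r)) A = ennreal r * emeasure (opm_scalar G k) A"
      using A Mk.sets_circle by (simp add: emeasure_density nn_integral_cmult_indicator)
    ultimately show "emeasure (opm_scalar G (scaleC c k)) A = emeasure (density (opm_scalar G k) (\<lambda>_. ennreal r)) A"
      using opm_emeasure[OF G ck A] opm_emeasure[OF G k A] spectral_form_nonneg[OF G k A]
      by (simp add: r_def ennreal_mult)
  qed (simp add: Mk.sets_circle Mck.sets_circle)
  have "integral\<^sup>L (opm_scalar G (scaleC c k)) f = integral\<^sup>L (opm_scalar G k) (\<lambda>x. r *\<^sub>R f x)"
    unfolding eq by (rule integral_density[OF Mk.measurable_continuous[OF f]]) (auto simp: r_def)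
  then show ?thesis by (simp add: scaleR_conv_of_real r_def)
qed

lemma opm_integral_diagonal:
  assumes G: "gen_spectral_measure K G" and K: "hs_closed_subspace K" and k: "k \<in> K"
    and f: "continuous_on unit_circle f"
  shows "opm_integral G f k k = integral\<^sup>L (opm_scalar G k) f"
proof -
  have "k + scaleC (\<i> ^ j) k = scaleC (1 + \<i> ^ j) k" for j
    by (simp add: scaleC_add_left scaleC_one)
  then have "opm_integral G f k k
      = (1/4) * (\<Sum>j<4::nat. \<i> ^ j * (complex_of_real ((cmod (1 + \<i> ^ j))^2) * integral\<^sup>L (opm_scalar G k) f))"
    unfolding opm_integral_def by (simp only: opm_scalar_scaleC[OF G K k f])
  also have "\<dots> = integral\<^sup>L (opm_scalar G k) f"
    by (simp add: numeral_eq_Suc cmod_def power2_eq_square algebra_simps)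
  finally show ?thesis .
qed

lemma spectral_form_eq_if_herglotz_eq:
  assumes G: "gen_spectral_measure K G" and K: "hs_closed_subspace K" and k: "k \<in> K"
    and G': "gen_spectral_measure K' G'" and K': "hs_closed_subspace K'" and k': "k \<in> K'"
    and herg: "\<And>z. cmod z < 1 \<Longrightarrow>
      opm_integral G (\<lambda>\<xi>. (\<xi> + z) / (\<xi> - z)) k k = opm_integral G' (\<lambda>\<xi>. (\<xi> + z) / (\<xi> - z)) k k"
    and D: "D \<in> borel_circle"
  shows "cinner (G D k) k = cinner (G' D k) k"
proof -
  interpret herglotz_pair "opm_scalar G k" "opm_scalar G' k"
    using herg opm_circle_measure[OF G k] opm_circle_measure[OF G' k']
    by (simp add: herglotz_pair_def herglotz_pair_axioms_def continuous_herglotz_kernel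
        flip: opm_integral_diagonal[OF G K k] opm_integral_diagonal[OF G' K' k'])
  have "Re (cinner (G D k) k) = Re (cinner (G' D k) k)"
    using emeasure_eq[OF D] opm_emeasure[OF G k D] opm_emeasure[OF G' k' D]
      spectral_form_nonneg[OF G k D] spectral_form_nonneg[OF G' k' D] by simp
  moreover have "Im (cinner (G D k) k) = 0" "Im (cinner (G' D k) k) = 0"
    using G G' k k' D unfolding gen_spectral_measure_def by blast+
  ultimately show ?thesis by (simp add: complex_eq_iff)
qed

lemma compression_eq_if_diagonal_eq:
  assumes K: "hs_closed_subspace K" and B: "gen_spectral_measure K B"
    and E: "gen_spectral_measure UNIV E" and D: "D \<in> borel_circle"
    and diag: "\<And>k. k \<in> K \<Longrightarrow> cinner (B D k) k = cinner (E D k) k"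
    and k: "k \<in> K"
  shows "B D k = hs_proj K (E D k)"
proof -
  define C where "C = (\<lambda>x. B D x - hs_proj K (E D x))"
  have Blin: "\<And>x y. x \<in> K \<Longrightarrow> y \<in> K \<Longrightarrow> B D (x + y) = B D x + B D y"
    "\<And>c x. x \<in> K \<Longrightarrow> B D (scaleC c x) = scaleC c (B D x)" "B D k \<in> K"
    using B D k unfolding gen_spectral_measure_def by blast+
  have Elin: "\<And>x y. E D (x + y) = E D x + E D y" "\<And>c x. E D (scaleC c x) = scaleC c (E D x)"
    using E D unfolding gen_spectral_measure_def by blast+
  note Plin = proj_clinear[OF K]
  have "cinner (C k) (C k) = 0"
  proof (rule polarization_zero[OF K, where C=C and x=k and y="C k"])
    show "C (x + y) = C x + C y" if "x \<in> K" "y \<in> K" for x y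
      unfolding C_def using Blin(1)[OF that] Elin(1) clinear_add[OF Plin] by simp
    show "C (scaleC c x) = scaleC c (C x)" if "x \<in> K" for c x
      unfolding C_def using Blin(2)[OF that] Elin(2) clinear_scaleC[OF Plin] by (simp add: scaleC_diff_right)
    show "cinner (C x) x = 0" if x: "x \<in> K" for x
    proof -
      have "cinner (hs_proj K (E D x)) x = cinner (E D x) x"
        using proj_selfadj[OF K, of "E D x" x] proj_fix[OF K x] by simp
      then show ?thesis unfolding C_def cinner_diff_left using diag[OF x] by simp
    qed
    show "C k \<in> K" unfolding C_def by (rule closed_subspace_diff[OF K Blin(3) proj_in[OF K]])
  qed (rule k)
  then have "C k = 0" using cinner_eq_zero_iff by blast
  then show ?thesis unfolding C_def by simp
qed

theorem corollary3p3:
  fixes U :: "'h::chilbert \<Rightarrow> 'h"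
    and K :: "'h set"
    and E B :: "complex set \<Rightarrow> 'h \<Rightarrow> 'h"
  assumes U: "hs_unitary U"
    and K: "hs_closed_subspace K"
    and E: "spectral_measure E"
    and E_repr: "\<And>h1 h2 z. norm z < 1 \<Longrightarrow>
        cinner (U (inv (\<lambda>x. U x - scaleC z x) h1) + scaleC z (inv (\<lambda>x. U x - scaleC z x) h1)) h2
        = opm_integral E (\<lambda>\<xi>. (\<xi> + z) / (\<xi> - z)) h1 h2"
    and B: "gen_spectral_measure K B"
    and B_repr: "\<And>k1 k2 z. k1 \<in> K \<Longrightarrow> k2 \<in> K \<Longrightarrow> norm z < 1 \<Longrightarrow>
        (let S = (\<lambda>x. U x - hs_proj K (U x));
             w = inv_into (hs_adj U ` K) (\<lambda>x. U x - char_fun S z x) k1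
         in cinner (U w + char_fun S z w) k2)
        = opm_integral B (\<lambda>\<xi>. (\<xi> + z) / (\<xi> - z)) k1 k2"
  shows "\<forall>\<Delta>\<in>borel_circle. \<forall>k\<in>K. B \<Delta> k = hs_proj K (E \<Delta> k)"
proof -
  interpret compression U K using U K by unfold_locales
  have E': "gen_spectral_measure UNIV E" using E unfolding spectral_measure_def by blast
  have UNIV_subspace: "hs_closed_subspace (UNIV :: 'h set)" unfolding hs_closed_subspace_def by simp
  have "cinner (B D k) k = cinner (E D k) k" if k: "k \<in> K" and D: "D \<in> borel_circle" for D k
  proof (rule spectral_form_eq_if_herglotz_eq[OF B K k E' UNIV_subspace UNIV_I _ D])
    fix z :: complex assume z: "cmod z < 1"
    show "opm_integral B (\<lambda>\<xi>. (\<xi> + z) / (\<xi> - z)) k k = opm_integral E (\<lambda>\<xi>. (\<xi> + z) / (\<xi> - z)) k k"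
      using B_repr[OF k k, of z] E_repr[of z k k] herglotz_compression[OF z k k] z
      by (simp add: S_def Let_def)
  qed
  then show ?thesis using compression_eq_if_diagonal_eq[OF K B E'] by blast
qed

end
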